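(* Let $q$ be an odd prime power, $m\geq 2$ and $n=\frac{q^m+1}{2}$. Then the negacyclic BCH code $\mathcal{C}_{(q,n,2,0)}$, whose generator polynomial is $\mathbb{M}_{\beta}(x)$, has parameters $[n,n-2m,d]$, where $d=5$ if $q=3$; $d=3$ if $m$ is odd and $q>3$; and $d=4$ if $m$ is even and $q>3$.
   Context: Let $\ell$ be the order of $q$ modulo $2n$, $\alpha$ a primitive element of $\mathrm{GF}(q^\ell)$, $\beta=\alpha^{(q^\ell-1)/(2n)}$ (a primitive $2n$-th root of unity), and $\mathbb{M}_{\beta}(x)$ the minimal polynomial of $\beta$ over $\mathrm{GF}(q)$. $\mathcal{C}_{(q,n,2,0)}$ is the negacyclic code of length $n$ over $\mathrm{GF}(q)$, i.e. the ideal of $\mathrm{GF}(q)[x]/(x^n+1)$ generated by $\mathbb{M}_{\beta}(x)$. Parameters $[n,k,d]$ are length, dimension, minimum Hamming distance. *)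

theory Defs
  imports "HOL-Number_Theory.Number_Theory" "HOL-Computational_Algebra.Polynomial" "HOL-Library.Cardinality"
begin

text \<open>Field embedding of GF(q) (type 'a) into the extension field GF(q^l) (type 'b).\<close>
definition field_emb :: "('a::field \<Rightarrow> 'b::field) \<Rightarrow> bool" where
  "field_emb e \<longleftrightarrow> inj e \<and> e 0 = 0 \<and> e 1 = 1 \<and>
     (\<forall>x y. e (x + y) = e x + e y) \<and> (\<forall>x y. e (x * y) = e x * e y)"

definition min_poly :: "('a::field \<Rightarrow> 'b::field) \<Rightarrow> 'b \<Rightarrow> 'a poly" where
  "min_poly e b = (THE g. lead_coeff g = 1 \<and> poly (map_poly e g) b = 0 \<and>
      (\<forall>h. poly (map_poly e h) b = 0 \<longrightarrow> g dvd h))"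

definition primitive_elem :: "'b::{field,finite} \<Rightarrow> bool" where
  "primitive_elem a \<longleftrightarrow> (\<forall>x. x \<noteq> 0 \<longrightarrow> (\<exists>k. x = a ^ k))"

text \<open>Negacyclic code of length n generated by g: the ideal generated by g in
  F[x]/(x^n+1), residues represented by their remainders of degree < n.\<close>
definition negacyclic_code :: "nat \<Rightarrow> 'a::field poly \<Rightarrow> 'a poly set" where
  "negacyclic_code n g = {(g * f) mod (monom 1 n + 1) | f. True}"

definition hamming_wt :: "nat \<Rightarrow> 'a::zero poly \<Rightarrow> nat" where
  "hamming_wt n c = card {i. i < n \<and> coeff c i \<noteq> 0}"

definition min_dist :: "nat \<Rightarrow> 'a::zero poly set \<Rightarrow> nat" where
  "min_dist n C = Min {hamming_wt n c | c. c \<in> C \<and> c \<noteq> 0}"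

definition code_dim :: "'a::field poly set \<Rightarrow> nat" where
  "code_dim C = vector_space.dim (smult :: 'a \<Rightarrow> 'a poly \<Rightarrow> 'a poly) C"

end

(*
  The code consists of the polynomials of degree < n vanishing at beta, whose order is
  2n = q^m + 1.  Hence q has order 2m modulo 2n, the 2m conjugates beta^(q^i) are
  distinct, the minimal polynomial has degree 2m and the dimension is n - 2m.

  A codeword of weight w is a relation sum e(c_i) beta^i = 0 with w terms.  Applying
  the Frobenius x -> x^q, and x -> x^(q^m), which inverts every power of beta, and
  eliminating leads to (beta^i)^d = (beta^j)^d for some d dividing q^m - 1; as
  gcd(d, q^m + 1) divides 2, this forces i = j.  So weights 1 and 2 never occur,
  weight 3 only for odd m and q > 3, and weight 4 not for q = 3.  Conversely, there are
  more sparse polynomials of the relevant shape than elements of GF(q^2m) (or, for odd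
  m, of the subfield GF(q^2) containing beta^((q^m+1)/(q+1))), so two of them agree at
  beta and their difference is a light codeword.
*)

theory Submission
  imports Defs
begin

section \<open>Finite fields\<close>

text \<open>The library's \<open>finite_field_power_card_eq_same\<close> needs the sort \<open>finite_field\<close>,
  which the fields of the theorem are not known to have.\<close>

lemma power_card_eq_self:
  fixes x :: "'c::{field,finite}"
  shows "x ^ CARD('c) = x"
proof (cases "x = 0")
  case False
  let ?U = "UNIV - {0::'c}"
  have "bij_betw ((*) x) ?U ?U"
    using False by (intro bij_betwI[where g = "\<lambda>y. y / x"]) auto
  then have "(\<Prod>y\<in>?U. x * y) = (\<Prod>y\<in>?U. y)"
    by (rule prod.reindex_bij_betw)
  then have "x ^ card ?U * (\<Prod>y\<in>?U. y) = 1 * (\<Prod>y\<in>?U. y)"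
    by (simp add: prod.distrib)
  then have "x ^ card ?U = 1"
    by (subst (asm) mult_cancel_right) simp
  moreover have "CARD('c) = Suc (card ?U)"
    using finite_UNIV_card_ge_0[where 'a = 'c] by (simp add: card_Diff_subset)
  ultimately show ?thesis
    by (simp only: power_Suc mult_1_right)
qed (use finite_UNIV_card_ge_0[where 'a = 'c] in simp)

lemma power_card_power_eq_self:
  fixes x :: "'c::{field,finite}"
  shows "x ^ (CARD('c) ^ j) = x"
  by (induction j) (simp_all add: power_card_eq_self power_mult)

lemma CHAR_eq_if_card_eq_prime_power:
  assumes "prime p" "CARD('c::{field,finite}) = p ^ k"
  shows "CHAR('c) = p"
proof -
  have "prime CHAR('c)"
    by (simp add: finite_imp_CHAR_pos prime_CHAR_semidom)
  moreover have "CHAR('c) dvd p ^ k"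
    using CHAR_dvd_CARD[where 'a = 'c] assms(2) by simp
  ultimately show ?thesis
    using assms(1) prime_dvd_power primes_dvd_imp_eq by blast
qed

lemma finite_card_power_eq_self:
  fixes N :: nat
  assumes "2 \<le> N"
  shows "finite {z :: 'c::field. z ^ N = z}" and "card {z :: 'c::field. z ^ N = z} \<le> N"
proof -
  let ?X = "monom 1 N - monom 1 1 :: 'c poly"
  obtain r where "N = 2 + r"
    using assms le_Suc_ex by blast
  then have "coeff ?X N = 1"
    by simp
  then have X: "?X \<noteq> 0"
    by (metis coeff_0 zero_neq_one)
  have "degree ?X \<le> N"
    using assms by (intro degree_diff_le) (simp_all add: degree_monom_eq)
  moreover have roots: "{z. z ^ N = z} = {z. poly ?X z = 0}"
    by (simp add: poly_monom)
  ultimately show "finite {z :: 'c. z ^ N = z}" "card {z :: 'c. z ^ N = z} \<le> N"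
    using poly_roots_finite[OF X] le_trans[OF card_poly_roots_bound[OF X]] by simp_all
qed

lemma primitive_elem_ne_0:
  fixes \<alpha> :: "'c::{field,finite}"
  assumes "primitive_elem \<alpha>" "2 < CARD('c)"
  shows "\<alpha> \<noteq> 0"
proof -
  have "\<not> UNIV \<subseteq> {0, 1 :: 'c}"
  proof
    assume "UNIV \<subseteq> {0, 1 :: 'c}"
    then have "CARD('c) \<le> card {0, 1 :: 'c}"
      by (intro card_mono) auto
    with assms(2) show False
      by simp
  qed
  then obtain x :: 'c where x: "x \<noteq> 0" "x \<noteq> 1"
    by blast
  then obtain k where "x = \<alpha> ^ k"
    using assms(1) unfolding primitive_elem_def by blast
  then show ?thesis
    using x by (cases k) auto
qed

lemma power_card_pred_eq_1:
  fixes x :: "'c::{field,finite}"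
  assumes "x \<noteq> 0"
  shows "x ^ (CARD('c) - 1) = 1"
proof -
  have "Suc (CARD('c) - 1) = CARD('c)"
    using finite_UNIV_card_ge_0[where 'a = 'c] by simp
  then have "x * x ^ (CARD('c) - 1) = x * 1"
    by (metis power_Suc power_card_eq_self mult_1_right)
  then show ?thesis
    using assms by simp
qed

lemma inj_on_primitive_elem_powers:
  fixes \<alpha> :: "'c::{field,finite}"
  assumes "primitive_elem \<alpha>" "2 < CARD('c)"
  shows "inj_on (\<lambda>i. \<alpha> ^ i) {..<CARD('c) - 1}"
proof -
  let ?N = "CARD('c) - 1"
  have "\<alpha> \<noteq> 0"
    by (rule primitive_elem_ne_0[OF assms])
  have "UNIV - {0} \<subseteq> (\<lambda>i. \<alpha> ^ i) ` {..<?N}"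
  proof
    fix y :: 'c
    assume "y \<in> UNIV - {0}"
    then obtain i where "y = \<alpha> ^ i"
      using assms(1) unfolding primitive_elem_def by blast
    also have "\<alpha> ^ i = (\<alpha> ^ ?N) ^ (i div ?N) * \<alpha> ^ (i mod ?N)"
      by (simp only: power_mult [symmetric] power_add [symmetric] mult_div_mod_eq)
    also have "\<dots> = \<alpha> ^ (i mod ?N)"
      using power_card_pred_eq_1[OF \<open>\<alpha> \<noteq> 0\<close>] by simp
    finally show "y \<in> (\<lambda>i. \<alpha> ^ i) ` {..<?N}"
      using assms(2) by simp
  qed
  moreover have "(\<lambda>i. \<alpha> ^ i) ` {..<?N} \<subseteq> UNIV - {0}"
    using \<open>\<alpha> \<noteq> 0\<close> by auto
  ultimately have "card ((\<lambda>i. \<alpha> ^ i) ` {..<?N}) = card (UNIV - {0 :: 'c})"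
    by (metis subset_antisym)
  then have "card ((\<lambda>i. \<alpha> ^ i) ` {..<?N}) = card {..<?N}"
    by (simp add: card_Diff_singleton)
  then show ?thesis
    by (rule eq_card_imp_inj_on[rotated]) simp
qed

lemma primitive_elem_power_eq_1_iff:
  fixes \<alpha> :: "'c::{field,finite}"
  assumes "primitive_elem \<alpha>" "2 < CARD('c)"
  shows "\<alpha> ^ i = 1 \<longleftrightarrow> CARD('c) - 1 dvd i"
proof -
  let ?N = "CARD('c) - 1"
  have \<alpha>_N: "\<alpha> ^ ?N = 1"
    by (rule power_card_pred_eq_1[OF primitive_elem_ne_0[OF assms]])
  have "\<alpha> ^ i = (\<alpha> ^ ?N) ^ (i div ?N) * \<alpha> ^ (i mod ?N)"
    by (simp only: power_mult [symmetric] power_add [symmetric] mult_div_mod_eq)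
  then have "\<alpha> ^ i = 1 \<longleftrightarrow> \<alpha> ^ (i mod ?N) = \<alpha> ^ 0"
    using \<alpha>_N by simp
  also have "\<dots> \<longleftrightarrow> i mod ?N = 0"
    using inj_onD[OF inj_on_primitive_elem_powers[OF assms]] assms(2) by fastforce
  finally show ?thesis
    by auto
qed

lemma primitive_elem_root_of_unity:
  fixes \<alpha> :: "'c::{field,finite}"
  assumes "primitive_elem \<alpha>" "2 < CARD('c)" "d dvd CARD('c) - 1"
  shows "(\<alpha> ^ ((CARD('c) - 1) div d)) ^ j = 1 \<longleftrightarrow> d dvd j"
proof -
  obtain r where r: "CARD('c) - 1 = d * r"
    using assms(3) by blast
  have "0 < r" "d \<noteq> 0"
    using r assms(2) by (auto intro!: gr0I)
  then have "(\<alpha> ^ ((CARD('c) - 1) div d)) ^ j = \<alpha> ^ (r * j)"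
    unfolding r by (simp add: power_mult)
  also have "\<dots> = 1 \<longleftrightarrow> d dvd j"
    using primitive_elem_power_eq_1_iff[OF assms(1,2), of "r * j"] r \<open>0 < r\<close>
    by (simp add: mult.commute[of d])
  finally show ?thesis .
qed

section \<open>Elementary number theory\<close>

lemma dvd_twice_eq_if_greater:
  fixes t m :: nat
  assumes "t dvd 2 * m" "m < t" "0 < m"
  shows "t = 2 * m"
proof -
  obtain c where c: "2 * m = t * c"
    using assms(1) by blast
  have "c < 2"
  proof (rule ccontr)
    assume "\<not> c < 2"
    then have "t * 2 \<le> 2 * m"
      unfolding c by (intro mult_le_mono2) simp
    with assms(2) show False
      by simp
  qed
  moreover have "c \<noteq> 0"
    using c assms(3) by (cases "c = 0") simp_all
  ultimately show ?thesis
    using c by (simp add: less_2_cases_iff)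
qed

lemma ord_power_plus_one:
  fixes q m :: nat
  assumes "2 \<le> q" "0 < m"
  shows "ord (q ^ m + 1) q = 2 * m"
proof -
  let ?N = "q ^ m + 1"
  let ?t = "ord ?N q"
  have "x * x = (x - 1) * (x + 1) + 1" if "1 \<le> x" for x :: nat
    using that by (cases x) (simp_all add: algebra_simps)
  then have "q ^ (2 * m) = (q ^ m - 1) * ?N + 1"
    using assms(1) by (simp add: power_mult power2_eq_square mult.commute[of 2])
  then have "[q ^ (2 * m) = 1] (mod ?N)"
    unfolding cong_def by (simp only: mod_mult_self3)
  then have t_dvd: "?t dvd 2 * m"
    using ord_divides by blast
  have "coprime ?N q"
    using coprime_Suc_left_nat[of "q ^ m"] assms(2) by simp
  then have "0 < ?t"
    by (simp add: ord_eq_0)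
  have "\<not> ?t \<le> m"
  proof
    assume "?t \<le> m"
    have "q ^ 1 \<le> q ^ ?t" "q ^ ?t \<le> q ^ m"
      by (rule power_increasing; use \<open>0 < ?t\<close> \<open>?t \<le> m\<close> assms(1) in linarith)+
    then have "0 < q ^ ?t - 1" "q ^ ?t - 1 < ?N"
      using assms(1) unfolding power_one_right by linarith+
    moreover have "?N dvd q ^ ?t - 1"
      using ord[of q ?N] cong_altdef_nat[of 1 "q ^ ?t" ?N] \<open>0 < q ^ ?t - 1\<close> by simp
    ultimately show False
      by (simp add: nat_dvd_not_less)
  qed
  with t_dvd assms(2) show ?thesis
    by (intro dvd_twice_eq_if_greater) simp_all
qed

lemma pred_dvd_power_pred:
  fixes x :: nat
  assumes "1 \<le> x"
  shows "x - 1 dvd x ^ k - 1"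
proof -
  have "[x = 1] (mod x - 1)"
    using assms by (simp add: cong_altdef_nat)
  then have "[x ^ k = 1] (mod x - 1)"
    using cong_pow by fastforce
  then show ?thesis
    using assms by (simp add: cong_altdef_nat)
qed

text \<open>Any common divisor of \<open>x - 1\<close> and \<open>x + 1\<close> divides \<open>2\<close>.\<close>

lemma plus_one_dvd_twice:
  fixes x d t :: nat
  assumes "1 \<le> x" "d dvd x - 1" "x + 1 dvd t * d"
  shows "x + 1 dvd 2 * t"
proof -
  have "gcd d (x + 1) dvd x - 1"
    using assms(2) gcd_dvd1 dvd_trans by blast
  then have "gcd d (x + 1) dvd (x + 1) - (x - 1)"
    using gcd_dvd2 dvd_diff_nat by blast
  then have "gcd d (x + 1) dvd 2"
    using assms(1) by simp
  have "x + 1 dvd gcd (t * d) (t * (x + 1))"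
    by (intro gcd_greatest assms(3) dvd_triv_right)
  also have "\<dots> = t * gcd d (x + 1)"
    by (simp add: gcd_mult_distrib_nat)
  also have "\<dots> dvd t * 2"
    using \<open>gcd d (x + 1) dvd 2\<close> by simp
  finally show ?thesis
    by (simp add: mult.commute)
qed

lemma plus_one_dvd_power_plus_one:
  fixes q m :: nat
  assumes "odd m"
  shows "q + 1 dvd q ^ m + 1"
proof -
  have "[int q = - 1] (mod int q + 1)"
    by (simp add: cong_iff_dvd_diff)
  then have "[int q ^ m = (- 1) ^ m] (mod int q + 1)"
    by (rule cong_pow)
  then have "int q + 1 dvd int q ^ m + 1"
    using assms by (simp add: cong_iff_dvd_diff)
  then have "int (q + 1) dvd int (q ^ m + 1)"
    by (simp add: add.commute)
  then show ?thesis
    by (simp only: int_dvd_int_iff)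
qed

lemma card_ordered_pairs: "2 * card {(i, j). i < j \<and> j < (N::nat)} = N * (N - 1)"
proof (induction N)
  case (Suc N)
  have "{(i, j). i < j \<and> j < Suc N} = {(i, j). i < j \<and> j < N} \<union> {..<N} \<times> {N}"
    by auto
  moreover have "finite {(i, j). i < j \<and> j < N}"
    by (rule finite_subset[of _ "{..<N} \<times> {..<N}"]) auto
  ultimately have "card {(i, j). i < j \<and> j < Suc N} = card {(i, j). i < j \<and> j < N} + card ({..<N} \<times> {N})"
    by (simp only:) (rule card_Un_disjoint, auto)
  with Suc.IH show ?case
    by (cases N) (auto simp: algebra_simps)
qed simp

section \<open>Polynomials and negacyclic codes\<close>

lemma monic_poly_dvd_antisym:
  fixes g h :: "'a::idom poly"
  assumes "lead_coeff g = 1" "lead_coeff h = 1" "g dvd h" "h dvd g"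
  shows "g = h"
proof -
  obtain r where r: "h = g * r"
    using assms(3) by blast
  have "g \<noteq> 0" "h \<noteq> 0"
    using assms(1,2) by auto
  then have "degree r = 0"
    using r dvd_imp_degree_le[OF assms(4)] by (auto simp: degree_mult_eq)
  moreover have "lead_coeff r = 1"
    using r assms(1,2) by (simp add: lead_coeff_mult)
  ultimately have "r = 1"
    by (auto elim!: degree_eq_zeroE simp: one_pCons)
  then show ?thesis
    using r by simp
qed

lemma poly_eq_sum_lessThan:
  fixes f :: "'a::comm_semiring_1 poly"
  assumes "degree f < n"
  shows "poly f x = (\<Sum>i<n. coeff f i * x ^ i)"
proof -
  have "(\<Sum>i\<le>degree f. coeff f i * x ^ i) = (\<Sum>i<n. coeff f i * x ^ i)"
    using assms by (intro sum.mono_neutral_left) (auto simp: coeff_eq_0 not_le)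
  then show ?thesis
    by (simp add: poly_altdef)
qed

lemma two_term_poly_eqD:
  fixes a b a' b' :: "'a::comm_monoid_add"
  assumes "monom a i + monom b j = monom a' i' + monom b' j'"
    and "i < j" "i' < j'" "a \<noteq> 0" "b \<noteq> 0" "a' \<noteq> 0" "b' \<noteq> 0"
  shows "i = i' \<and> j = j' \<and> a = a' \<and> b = b'"
proof -
  have support: "{t. coeff (monom a i + monom b j) t \<noteq> 0} = {i, j}"
    if "i < j" "a \<noteq> 0" "b \<noteq> 0" for i j :: nat and a b :: 'a
    using that by auto
  have "{i, j} = {i', j'}"
    using support[of i j a b] support[of i' j' a' b'] assms by simp
  then have "i = i' \<and> j = j'"
    using assms(2,3) by (auto simp: doubleton_eq_iff)
  then show ?thesis
    using arg_cong[OF assms(1), of "\<lambda>c. coeff c i"] arg_cong[OF assms(1), of "\<lambda>c. coeff c j"]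
      assms(2) by auto
qed

lemma inj_on_two_term_polys:
  "inj_on (\<lambda>((i, j), a, b). monom a i + monom b j)
     ({(i, j). i < j} \<times> (UNIV - {0 :: 'a::comm_monoid_add}) \<times> (UNIV - {0}))"
  by (intro inj_onI) (auto dest: two_term_poly_eqD)

lemma inj_on_two_term_plus_monom_polys:
  "inj_on (\<lambda>(((i, j), a, b), t). monom a i + monom b j + monom t N)
     (({(i, j). i < j \<and> j < N} \<times> (UNIV - {0 :: 'a::comm_ring_1}) \<times> (UNIV - {0})) \<times> UNIV)"
proof -
  have cancel: "t = t' \<and> monom a i + monom b j = monom a' i' + monom b' j'"
    if "monom a i + monom b j + monom t N = monom a' i' + monom b' j' + monom t' N"
      and "j < N" "j' < N" "i < j" "i' < j'"
    for i j i' j' :: nat and a b t a' b' t' :: 'a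
  proof -
    have "t = t'"
      using arg_cong[OF that(1), of "\<lambda>c. coeff c N"] that(2-5) by simp
    with that(1) show ?thesis
      by simp
  qed
  show ?thesis
    by (intro inj_onI) (force dest: cancel two_term_poly_eqD)
qed

lemma inj_three_term_polys:
  assumes "0 < k"
  shows "inj (\<lambda>(a, b, c). monom a 0 + monom b k + monom c (2 * k) :: 'a::comm_monoid_add poly)"
proof (rule injI)
  fix y z :: "'a \<times> 'a \<times> 'a"
  let ?P = "\<lambda>(a, b, c). monom a 0 + monom b k + monom c (2 * k) :: 'a poly"
  assume eq: "?P y = ?P z"
  obtain a b c a' b' c' where y: "y = (a, b, c)" and z: "z = (a', b', c')"
    by (metis prod.collapse)
  have "coeff (?P y) 0 = coeff (?P z) 0" "coeff (?P y) k = coeff (?P z) k"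
    "coeff (?P y) (2 * k) = coeff (?P z) (2 * k)"
    using eq by simp_all
  then show "y = z"
    using assms by (simp add: y z)
qed

lemma hamming_wt_le: "hamming_wt n c \<le> n"
proof -
  have "hamming_wt n c \<le> card {..<n}"
    unfolding hamming_wt_def by (intro card_mono) auto
  then show ?thesis
    by simp
qed

lemma degree_less_hamming_wt_le_of_support:
  assumes "0 < n" "set xs \<subseteq> {..<n}" "\<And>i. coeff c i \<noteq> 0 \<Longrightarrow> i \<in> set xs"
  shows "degree c < n" and "hamming_wt n c \<le> length xs"
proof -
  have "coeff c k = 0" if "n \<le> k" for k
    using assms(2) assms(3)[of k] that by (rule_tac ccontr) auto
  then show "degree c < n"
    using assms(1) by (intro degree_lessI) auto
  have "hamming_wt n c \<le> card (set xs)"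
    unfolding hamming_wt_def using assms(3) by (intro card_mono) auto
  also have "\<dots> \<le> length xs"
    by (rule card_length)
  finally show "hamming_wt n c \<le> length xs" .
qed

lemma min_dist_eqI:
  assumes "\<And>c. c \<in> C \<Longrightarrow> c \<noteq> 0 \<Longrightarrow> d \<le> hamming_wt n c"
    and "c \<in> C" "c \<noteq> 0" "hamming_wt n c \<le> d"
  shows "min_dist n C = d"
proof -
  have "finite {hamming_wt n c |c. c \<in> C \<and> c \<noteq> 0}"
    by (rule finite_subset[of _ "{..n}"]) (auto simp: hamming_wt_le)
  moreover have "hamming_wt n c = d"
    using assms by (simp add: antisym)
  ultimately show ?thesis
    unfolding min_dist_def using assms by (intro Min_eqI) auto
qed

lemma degree_monom_plus_one:
  assumes "0 < n"
  shows "degree (monom 1 n + 1 :: 'a::field poly) = n"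
  using assms by (simp add: degree_add_eq_left degree_monom_eq)

lemma monom_plus_one_ne_0:
  assumes "0 < n"
  shows "monom 1 n + 1 \<noteq> (0 :: 'a::field poly)"
  using degree_monom_plus_one[OF assms, where 'a = 'a] assms by (metis degree_0 less_irrefl)

lemma negacyclic_code_eq:
  fixes g :: "'a::field poly"
  assumes "0 < n" "g dvd monom 1 n + 1"
  shows "negacyclic_code n g = {c. degree c < n \<and> g dvd c}"
proof -
  let ?X = "monom 1 n + 1 :: 'a poly"
  have deg_X: "degree ?X = n"
    using degree_monom_plus_one[OF assms(1)] .
  have "?X \<noteq> 0"
    using monom_plus_one_ne_0[OF assms(1)] .
  have "degree ((g * f) mod ?X) < n" for f
    using degree_mod_less'[OF \<open>?X \<noteq> 0\<close>, of "g * f"] deg_X assms(1)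
    by (cases "(g * f) mod ?X = 0") auto
  moreover have "g dvd (g * f) mod ?X" for f
    using assms(2) by (simp add: dvd_mod)
  moreover have "\<exists>f. c = (g * f) mod ?X" if c: "degree c < n" "g dvd c" for c
  proof -
    obtain f where "c = g * f"
      using c(2) by blast
    moreover have "c mod ?X = c"
      using c(1) deg_X by (simp add: mod_poly_less)
    ultimately show ?thesis
      by metis
  qed
  ultimately show ?thesis
    unfolding negacyclic_code_def by auto
qed

interpretation poly_vs: vector_space "smult :: 'a::field \<Rightarrow> 'a poly \<Rightarrow> 'a poly"
  by unfold_locales (simp_all add: smult_add_right smult_add_left)

lemma smult_mult_monom_sum:
  fixes g :: "'a::comm_ring_1 poly"
  shows "(\<Sum>i<K. smult (a i) (g * monom 1 i)) = g * (\<Sum>i<K. monom (a i) i)"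
  by (simp add: sum_distrib_left smult_monom flip: mult_smult_right)

lemma independent_mult_monoms:
  fixes g :: "'a::field poly"
  assumes "g \<noteq> 0"
  shows "poly_vs.independent ((\<lambda>i. g * monom 1 i) ` {..<K})"
proof (rule poly_vs.independent_if_scalars_zero)
  let ?b = "\<lambda>i. g * monom 1 i"
  have monom_inj: "x = y" if "monom (1::'a) x = monom 1 y" for x y
    using arg_cong[OF that, of "\<lambda>p. coeff p x"] by (simp split: if_splits)
  have "inj_on ?b {..<K}"
    by (intro inj_onI) (use assms monom_inj in auto)
  fix u v
  assume sum0: "(\<Sum>x\<in>?b ` {..<K}. smult (u x) x) = 0" and "v \<in> ?b ` {..<K}"
  then obtain i where i: "i < K" "v = ?b i"
    by auto
  have "g * (\<Sum>j<K. monom (u (?b j)) j) = 0"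
    using sum0 by (simp add: sum.reindex[OF \<open>inj_on ?b {..<K}\<close>] smult_mult_monom_sum)
  then have "coeff (\<Sum>j<K. monom (u (?b j)) j) i = 0"
    using assms by simp
  then show "u v = 0"
    using i by (simp add: coeff_sum)
qed simp

lemma code_dim_multiples:
  fixes g :: "'a::field poly"
  assumes "g \<noteq> 0" "degree g \<le> n"
  shows "code_dim {c. degree c < n \<and> g dvd c} = n - degree g"
proof -
  let ?K = "n - degree g"
  let ?b = "\<lambda>i. g * monom 1 i"
  let ?C = "{c. degree c < n \<and> g dvd c}"
  have deg_b: "degree (?b i) = degree g + i" for i
    using assms(1) by (simp add: degree_mult_eq degree_monom_eq)
  have "?b ` {..<?K} \<subseteq> ?C"
    using assms(2) by (auto simp: deg_b)
  moreover have "?C \<subseteq> poly_vs.span (?b ` {..<?K})"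
  proof
    fix c
    assume "c \<in> ?C"
    then obtain f where c: "c = g * f" "degree c < n"
      by auto
    have "coeff f i = 0" if "?K \<le> i" for i
      using c that assms(1) by (cases "f = 0") (auto simp: degree_mult_eq coeff_eq_0)
    then have "f = (\<Sum>i<?K. monom (coeff f i) i)"
      by (intro poly_eqI) (auto simp: coeff_sum)
    then have "c = (\<Sum>i<?K. smult (coeff f i) (?b i))"
      using c(1) by (simp add: smult_mult_monom_sum)
    also have "\<dots> \<in> poly_vs.span (?b ` {..<?K})"
      by (intro poly_vs.span_sum poly_vs.span_scale poly_vs.span_base) auto
    finally show "c \<in> poly_vs.span (?b ` {..<?K})" .
  qed
  moreover have "poly_vs.independent (?b ` {..<?K})"
    by (rule independent_mult_monoms[OF assms(1)])
  moreover have "inj_on ?b {..<?K}"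
    by (intro inj_onI) (metis add_left_cancel deg_b)
  then have "card (?b ` {..<?K}) = ?K"
    by (simp add: card_image)
  ultimately show ?thesis
    unfolding code_dim_def by (rule poly_vs.dim_unique)
qed

section \<open>Eliminating a relation against its Frobenius images\<close>

lemma two_term_relation_cross_eq:
  fixes A B u v :: "'c::field"
  assumes "A * u + B * v = 0" "A * u ^ k + B * v ^ k = 0" "A \<noteq> 0"
  shows "u * v ^ k = v * u ^ k"
proof -
  have "A * (u * v ^ k - v * u ^ k) = (A * u + B * v) * v ^ k - v * (A * u ^ k + B * v ^ k)"
    by (simp add: algebra_simps)
  then show ?thesis
    using assms by simp
qed

lemma power_pred_eq_if_cross_eq:
  fixes u v :: "'c::field"
  assumes "u * v ^ k = v * u ^ k" "u \<noteq> 0" "v \<noteq> 0"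
  shows "u ^ (k - 1) = v ^ (k - 1)"
proof (cases k)
  case (Suc k')
  then have "(u * v) * v ^ k' = (u * v) * u ^ k'"
    using assms(1) by (simp add: ac_simps)
  then show ?thesis
    using assms(2,3) Suc by simp
qed simp

lemma three_term_relation_quadratic:
  fixes A B C u v w :: "'c::field"
  assumes "A * u + B * v + C * w = 0" "A * inverse u + B * inverse v + C * inverse w = 0"
    and "u \<noteq> 0" "v \<noteq> 0" "w \<noteq> 0"
  shows "A * B * u\<^sup>2 + (A\<^sup>2 + B\<^sup>2 - C\<^sup>2) * u * v + A * B * v\<^sup>2 = 0"
proof -
  have "A * v * w + B * u * w + C * u * v = (A * inverse u + B * inverse v + C * inverse w) * (u * v * w)"
    using assms(3-5) by (simp add: field_simps)
  also have "\<dots> = 0"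
    using assms(2) by simp
  finally have reciprocal: "A * v * w + B * u * w + C * u * v = 0" .
  have "A * B * u\<^sup>2 + (A\<^sup>2 + B\<^sup>2 - C\<^sup>2) * u * v + A * B * v\<^sup>2 =
      (A * v + B * u) * (A * u + B * v + C * w) - C * (A * v * w + B * u * w + C * u * v)"
    by (simp add: algebra_simps power2_eq_square)
  then show ?thesis
    using assms(1) reciprocal by simp
qed

lemma quadratic_relation_frobenius:
  fixes A B K u v :: "'c::field"
  assumes "A * B * u\<^sup>2 + K * u * v + A * B * v\<^sup>2 = 0"
    and "A * B * (u ^ k)\<^sup>2 + K * u ^ k * v ^ k + A * B * (v ^ k)\<^sup>2 = 0"
    and "A \<noteq> 0" "B \<noteq> 0"
  shows "u * v ^ k = v * u ^ k \<or> u * u ^ k = v * v ^ k"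
proof -
  have "A * B * ((u * v ^ k - v * u ^ k) * (u * u ^ k - v * v ^ k)) =
      u ^ k * v ^ k * (A * B * u\<^sup>2 + K * u * v + A * B * v\<^sup>2)
      - u * v * (A * B * (u ^ k)\<^sup>2 + K * u ^ k * v ^ k + A * B * (v ^ k)\<^sup>2)"
    by (simp add: algebra_simps power2_eq_square)
  then show ?thesis
    using assms by simp
qed

lemma reciprocal_three_term_char_3:
  fixes U\<^sub>1 U\<^sub>2 U\<^sub>3 :: "'c::field"
  assumes "(3::'c) = 0" "U\<^sub>1 + U\<^sub>2 + U\<^sub>3 = 0" "inverse U\<^sub>1 + inverse U\<^sub>2 + inverse U\<^sub>3 = 0"
    and "U\<^sub>1 \<noteq> 0" "U\<^sub>2 \<noteq> 0" "U\<^sub>3 \<noteq> 0"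
  shows "U\<^sub>1 = U\<^sub>2"
proof -
  have "U\<^sub>2 * U\<^sub>3 + U\<^sub>1 * U\<^sub>3 + U\<^sub>1 * U\<^sub>2 = (inverse U\<^sub>1 + inverse U\<^sub>2 + inverse U\<^sub>3) * (U\<^sub>1 * U\<^sub>2 * U\<^sub>3)"
    using assms(4-6) by (simp add: field_simps)
  then have e2: "U\<^sub>2 * U\<^sub>3 + U\<^sub>1 * U\<^sub>3 + U\<^sub>1 * U\<^sub>2 = 0"
    using assms(3) by simp
  have "(U\<^sub>1 - U\<^sub>2)\<^sup>2 = (U\<^sub>1 + U\<^sub>2) * (U\<^sub>1 + U\<^sub>2 + U\<^sub>3) - (U\<^sub>2 * U\<^sub>3 + U\<^sub>1 * U\<^sub>3 + U\<^sub>1 * U\<^sub>2) - 3 * U\<^sub>1 * U\<^sub>2"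
    by (simp add: algebra_simps power2_eq_square)
  also have "\<dots> = 0"
    using assms(1,2) e2 by simp
  finally show ?thesis
    by simp
qed

lemma reciprocal_four_term:
  fixes U\<^sub>1 U\<^sub>2 U\<^sub>3 U\<^sub>4 :: "'c::field"
  assumes "U\<^sub>1 + U\<^sub>2 + U\<^sub>3 + U\<^sub>4 = 0"
    and "inverse U\<^sub>1 + inverse U\<^sub>2 + inverse U\<^sub>3 + inverse U\<^sub>4 = 0"
    and "U\<^sub>1 \<noteq> 0" "U\<^sub>2 \<noteq> 0" "U\<^sub>3 \<noteq> 0" "U\<^sub>4 \<noteq> 0"
  shows "U\<^sub>1 + U\<^sub>2 = 0 \<or> U\<^sub>1 + U\<^sub>3 = 0 \<or> U\<^sub>1 + U\<^sub>4 = 0"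
proof -
  let ?e\<^sub>3 = "U\<^sub>2 * U\<^sub>3 * U\<^sub>4 + U\<^sub>1 * U\<^sub>3 * U\<^sub>4 + U\<^sub>1 * U\<^sub>2 * U\<^sub>4 + U\<^sub>1 * U\<^sub>2 * U\<^sub>3"
  have "?e\<^sub>3 = (inverse U\<^sub>1 + inverse U\<^sub>2 + inverse U\<^sub>3 + inverse U\<^sub>4) * (U\<^sub>1 * U\<^sub>2 * U\<^sub>3 * U\<^sub>4)"
    using assms(3-6) by (simp add: field_simps)
  then have "?e\<^sub>3 = 0"
    using assms(2) by simp
  moreover have "(U\<^sub>1 + U\<^sub>2) * (U\<^sub>1 + U\<^sub>3) * (U\<^sub>1 + U\<^sub>4) = U\<^sub>1\<^sup>2 * (U\<^sub>1 + U\<^sub>2 + U\<^sub>3 + U\<^sub>4) + ?e\<^sub>3"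
    by (simp add: algebra_simps power2_eq_square)
  ultimately show ?thesis
    using assms(1) by simp
qed

section \<open>Field embeddings and minimal polynomials\<close>

locale field_embedding =
  fixes e :: "'a::field \<Rightarrow> 'b::field"
  assumes field_emb: "field_emb e"
begin

lemma emb_0 [simp]: "e 0 = 0"
  and emb_1 [simp]: "e 1 = 1"
  and emb_add [simp]: "e (x + y) = e x + e y"
  and emb_mult [simp]: "e (x * y) = e x * e y"
  and inj_emb: "inj e"
  using field_emb by (auto simp: field_emb_def)

lemma emb_eq_iff [simp]: "e x = e y \<longleftrightarrow> x = y"
  using inj_emb by (auto dest: injD)

lemma emb_eq_0_iff [simp]: "e x = 0 \<longleftrightarrow> x = 0"
  using emb_eq_iff[of x 0] by simp

lemma emb_minus [simp]: "e (- x) = - e x"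
  by (metis add.right_inverse add_eq_0_iff emb_0 emb_add)

lemma emb_diff [simp]: "e (x - y) = e x - e y"
  using emb_add[of x "- y"] by simp

lemma emb_power [simp]: "e (x ^ j) = e x ^ j"
  by (induction j) simp_all

lemma coeff_map_poly_emb [simp]: "coeff (map_poly e f) i = e (coeff f i)"
  by (simp add: coeff_map_poly)

lemma degree_map_poly_emb [simp]: "degree (map_poly e f) = degree f"
  by (rule degree_map_poly) simp

lemma map_poly_emb_eq_0_iff [simp]: "map_poly e f = 0 \<longleftrightarrow> f = 0"
  by (simp add: map_poly_eq_0_iff)

lemma map_poly_emb_add [simp]: "map_poly e (f + g) = map_poly e f + map_poly e g"
  by (intro poly_eqI) simp

lemma map_poly_emb_diff [simp]: "map_poly e (f - g) = map_poly e f - map_poly e g"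
  by (intro poly_eqI) simp

lemma map_poly_emb_smult [simp]: "map_poly e (smult a f) = smult (e a) (map_poly e f)"
  by (intro poly_eqI) simp

lemma map_poly_emb_monom [simp]: "map_poly e (monom a i) = monom (e a) i"
  by (simp add: map_poly_monom)

lemma map_poly_emb_mult [simp]: "map_poly e (f * g) = map_poly e f * map_poly e g"
proof (induction f)
  case (pCons a f)
  then show ?case
    by (simp add: map_poly_pCons)
qed simp

lemma min_poly_eqI:
  assumes "lead_coeff g = 1" "poly (map_poly e g) b = 0"
    and "\<And>h. poly (map_poly e h) b = 0 \<Longrightarrow> g dvd h"
  shows "min_poly e b = g"
  unfolding min_poly_def
proof (rule the_equality)
  fix g'
  assume g': "lead_coeff g' = 1 \<and> poly (map_poly e g') b = 0 \<and>
    (\<forall>h. poly (map_poly e h) b = 0 \<longrightarrow> g' dvd h)"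
  then show "g' = g"
    using assms by (intro monic_poly_dvd_antisym) auto
qed (use assms in auto)

lemma min_poly:
  assumes "f \<noteq> 0" "poly (map_poly e f) b = 0"
  shows "lead_coeff (min_poly e b) = 1"
    and "poly (map_poly e h) b = 0 \<longleftrightarrow> min_poly e b dvd h"
    and "degree (min_poly e b) \<le> degree f"
proof -
  let ?ann = "\<lambda>f. f \<noteq> 0 \<and> poly (map_poly e f) b = 0"
  obtain f0 where f0: "?ann f0" and least: "\<And>h. ?ann h \<Longrightarrow> degree f0 \<le> degree h"
    using ex_has_least_nat[of ?ann f degree] assms by blast
  define g where "g = smult (inverse (lead_coeff f0)) f0"
  have g: "lead_coeff g = 1" "poly (map_poly e g) b = 0" "degree g = degree f0"
    using f0 by (simp_all add: g_def)
  have dvd: "g dvd h" if "poly (map_poly e h) b = 0" for h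
  proof -
    have "poly (map_poly e (h div g)) b * poly (map_poly e g) b + poly (map_poly e (h mod g)) b =
        poly (map_poly e h) b"
      by (metis div_mult_mod_eq map_poly_emb_add map_poly_emb_mult poly_add poly_mult)
    then have "poly (map_poly e (h mod g)) b = 0"
      using that g(2) by simp
    then have "h mod g = 0"
      using least[of "h mod g"] degree_mod_less'[of g h] g by fastforce
    then show ?thesis
      by (simp add: mod_eq_0_iff_dvd)
  qed
  have "min_poly e b = g"
    using g dvd by (intro min_poly_eqI)
  then show "lead_coeff (min_poly e b) = 1" "degree (min_poly e b) \<le> degree f"
    and "poly (map_poly e h) b = 0 \<longleftrightarrow> min_poly e b dvd h"
    using g dvd least[of f] assms by auto
qed

lemma pigeonhole_root:
  assumes "finite D" "inj_on P D" "finite R" "card R < card D"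
    and "\<And>x. x \<in> D \<Longrightarrow> poly (map_poly e (P x)) b \<in> R"
  obtains x y where "x \<in> D" "y \<in> D" "P x \<noteq> P y" "poly (map_poly e (P x - P y)) b = 0"
proof -
  let ?F = "\<lambda>x. poly (map_poly e (P x)) b"
  have "card (?F ` D) \<le> card R"
    using assms(3,5) by (intro card_mono) auto
  then have "\<not> inj_on ?F D"
    using assms(4) card_image by fastforce
  then obtain x y where "x \<in> D" "y \<in> D" "x \<noteq> y" "?F x = ?F y"
    unfolding inj_on_def by blast
  with assms(2) show ?thesis
    by (intro that[of x y]) (auto simp: inj_on_def)
qed

end

locale finite_field_embedding = field_embedding e
  for e :: "'a::{field,finite} \<Rightarrow> 'b::{field,finite}"
begin

lemma exists_annihilator_degree_le:
  assumes "CARD('b) < CARD('a) ^ Suc d"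
  obtains f where "f \<noteq> 0" "degree f \<le> d" "poly (map_poly e f) b = 0"
proof -
  define P where "P c = (\<Sum>i\<le>d. monom (c i) i)" for c :: "nat \<Rightarrow> 'a"
  let ?D = "PiE {..d} (\<lambda>_. UNIV :: 'a set)"
  have coeff_P: "coeff (P c) i = (if i \<le> d then c i else 0)" for c i
    by (simp add: P_def coeff_sum)
  have inj: "inj_on P ?D"
    by (intro inj_onI PiE_ext) (auto simp: poly_eq_iff coeff_P split: if_splits)
  have card: "card (UNIV :: 'b set) < card ?D"
    using assms by (simp add: card_PiE)
  obtain c c' where "P c \<noteq> P c'" "poly (map_poly e (P c - P c')) b = 0"
    by (rule pigeonhole_root[of ?D P UNIV b]) (use inj card in \<open>auto simp: finite_PiE\<close>)
  moreover have "degree (P c - P c') \<le> d"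
    by (rule degree_le) (simp add: coeff_P)
  ultimately show ?thesis
    by (intro that) auto
qed

end

section \<open>The dimension\<close>

text \<open>The hypotheses of the theorem, with \<open>l = ord (2 * n) q\<close> already evaluated to \<open>2 * m\<close>
  and \<open>\<beta>\<close> described by its order rather than through a primitive element.\<close>

locale negacyclic_bch = finite_field_embedding e
  for e :: "'a::{field,finite} \<Rightarrow> 'b::{field,finite}" +
  fixes p k q m n :: nat and \<beta> :: 'b
  assumes prime_p: "prime p" and q_eq: "q = p ^ k" and odd_q: "odd q"
    and m_ge_2: "2 \<le> m" and two_n_eq: "2 * n = q ^ m + 1"
    and card_a: "CARD('a) = q" and card_b: "CARD('b) = q ^ (2 * m)"
    and beta_power_eq_1_iff: "\<beta> ^ j = 1 \<longleftrightarrow> 2 * n dvd j"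
begin

lemma q_ge_3: "3 \<le> q"
proof -
  have "card {0, 1 :: 'a} \<le> CARD('a)"
    by (rule card_mono) simp_all
  then show ?thesis
    using card_a odd_q by simp presburger
qed

lemma n_pos: "0 < n"
  using two_n_eq by simp

lemma CHAR_eq_p: "CHAR('b) = p"
  using CHAR_eq_if_card_eq_prime_power[OF prime_p] card_b q_eq by (simp flip: power_mult)

lemma frobenius_add: "(x + y :: 'b) ^ q ^ j = x ^ q ^ j + y ^ q ^ j"
  by (rule freshmans_dream'[where n = "k * j"]) (simp_all add: CHAR_eq_p prime_p q_eq power_mult)

lemma frobenius_add_q: "(x + y :: 'b) ^ q = x ^ q + y ^ q"
  using frobenius_add[of x y 1] by simp

lemma frobenius_sum: "(\<Sum>i\<in>S. f i :: 'b) ^ q ^ j = (\<Sum>i\<in>S. f i ^ q ^ j)"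
  by (rule freshmans_dream_sum'[where n = "k * j"]) (simp_all add: CHAR_eq_p prime_p q_eq power_mult)

lemma emb_power_q_power [simp]: "e a ^ q ^ j = e a"
  using power_card_power_eq_self[of a j] card_a by (metis emb_power)

lemma emb_power_q [simp]: "e a ^ q = e a"
  using emb_power_q_power[of a 1] by simp

lemma poly_map_poly_frobenius:
  "poly (map_poly e f) (x ^ q ^ j) = poly (map_poly e f) x ^ q ^ j"
  by (simp add: poly_altdef frobenius_sum power_mult_distrib flip: power_mult)
    (simp add: mult.commute)

lemma ord_q: "ord (2 * n) q = 2 * m"
  using ord_power_plus_one[of q m] q_ge_3 m_ge_2 two_n_eq by simp

lemma beta_ne_0: "\<beta> \<noteq> 0"
  using beta_power_eq_1_iff[of "2 * n"] n_pos by (cases "\<beta> = 0") (simp_all add: power_0_left)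

lemma beta_power_eq_iff: "\<beta> ^ a = \<beta> ^ b \<longleftrightarrow> [a = b] (mod 2 * n)"
proof -
  have le_case: "\<beta> ^ a = \<beta> ^ b \<longleftrightarrow> [a = b] (mod 2 * n)" if "a \<le> b" for a b
  proof -
    have "\<beta> ^ b = \<beta> ^ a * \<beta> ^ (b - a)"
      using that by (simp flip: power_add)
    then have "\<beta> ^ a = \<beta> ^ b \<longleftrightarrow> \<beta> ^ (b - a) = 1"
      using beta_ne_0 by auto
    then show ?thesis
      using that by (simp add: beta_power_eq_1_iff cong_altdef_nat cong_sym_eq[of a])
  qed
  from nat_le_linear[of a b] show ?thesis
  proof
    assume "b \<le> a"
    then show ?thesis
      using le_case[of b a] by (metis cong_sym_eq)
  qed (rule le_case)
qed

lemma beta_power_n: "\<beta> ^ n = - 1"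
proof -
  have "(\<beta> ^ n - 1) * (\<beta> ^ n + 1) = 0"
    using beta_power_eq_1_iff[of "n * 2"] by (simp add: algebra_simps power_mult flip: power2_eq_square)
  moreover have "\<beta> ^ n \<noteq> 1"
    using beta_power_eq_1_iff[of n] n_pos by auto
  ultimately show ?thesis
    by (simp add: add_eq_0_iff2)
qed

lemma beta_power_inverse: "(\<beta> ^ i) ^ q ^ m = inverse (\<beta> ^ i)"
proof -
  have "\<beta> * \<beta> ^ q ^ m = 1"
    using beta_power_eq_1_iff[of "q ^ m + 1"] two_n_eq by simp
  then have "\<beta> ^ q ^ m = inverse \<beta>"
    using beta_ne_0 by (simp add: field_simps)
  have "(\<beta> ^ i) ^ q ^ m = (\<beta> ^ q ^ m) ^ i"
    by (simp add: mult.commute flip: power_mult)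
  then show ?thesis
    using \<open>\<beta> ^ q ^ m = inverse \<beta>\<close> by (simp add: power_inverse)
qed

lemma beta_conjugates_distinct:
  assumes "i < 2 * m" "j < 2 * m" "\<beta> ^ q ^ i = \<beta> ^ q ^ j"
  shows "i = j"
proof -
  have "coprime (2 * n) q"
    using ord_q m_ge_2 ord_eq_0[of "2 * n" q] by auto
  then have coprime: "coprime (q ^ i) (2 * n)" for i
    by (simp add: coprime_commute)
  have le_case: "i = j" if "i \<le> j" "j < 2 * m" "[q ^ i = q ^ j] (mod 2 * n)" for i j
  proof -
    have "[q ^ i * 1 = q ^ i * q ^ (j - i)] (mod 2 * n)"
      using that(1,3) by (simp flip: power_add)
    then have "[q ^ (j - i) = 1] (mod 2 * n)"
      by (simp only: cong_mult_lcancel_nat[OF coprime] cong_sym_eq)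
    then have "2 * m dvd j - i"
      by (simp only: ord_divides ord_q)
    then show "i = j"
      using that(1,2) by (cases "j - i = 0") (auto dest: dvd_imp_le)
  qed
  have "[q ^ i = q ^ j] (mod 2 * n)"
    using assms(3) beta_power_eq_iff by simp
  with nat_le_linear[of i j] show ?thesis
    using le_case[of i j] le_case[of j i] assms(1,2) by (auto simp: cong_sym_eq)
qed

lemma beta_power_power_inj:
  assumes "d dvd q ^ m - 1" "i < n" "j < n" "(\<beta> ^ i) ^ d = (\<beta> ^ j) ^ d"
  shows "i = j"
proof -
  have le_case: "i = j" if "i \<le> j" "j < n" "[i * d = j * d] (mod 2 * n)" for i j
  proof -
    have "q ^ m + 1 dvd (j - i) * d"
      using that(1,3) two_n_eq by (simp add: cong_altdef_nat cong_sym_eq[of "i * d"] diff_mult_distrib)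
    then have "2 * n dvd 2 * (j - i)"
      using plus_one_dvd_twice[OF _ assms(1)] q_ge_3 two_n_eq by simp
    then have "n dvd j - i"
      by simp
    then show "i = j"
      using that(1,2) by (cases "j - i = 0") (auto dest: dvd_imp_le)
  qed
  have "[i * d = j * d] (mod 2 * n)"
    using assms(4) by (simp add: beta_power_eq_iff flip: power_mult)
  with nat_le_linear[of i j] show ?thesis
    using le_case[of i j] le_case[of j i] assms(2,3) by (auto simp: cong_sym_eq)
qed

lemma annihilator_degree_ge:
  assumes "f \<noteq> 0" "poly (map_poly e f) \<beta> = 0"
  shows "2 * m \<le> degree f"
proof -
  let ?conj = "(\<lambda>i. \<beta> ^ q ^ i) ` {..<2 * m}"
  have "inj_on (\<lambda>i. \<beta> ^ q ^ i) {..<2 * m}"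
    by (intro inj_onI) (auto intro: beta_conjugates_distinct)
  then have card_conj: "card ?conj = 2 * m"
    by (simp add: card_image)
  have "?conj \<subseteq> {x. poly (map_poly e f) x = 0}"
    using assms(2) q_ge_3 by (auto simp: poly_map_poly_frobenius)
  then have "card ?conj \<le> card {x. poly (map_poly e f) x = 0}"
    using assms(1) by (intro card_mono poly_roots_finite) simp_all
  also have "\<dots> \<le> degree f"
    using card_poly_roots_bound[of "map_poly e f"] assms(1) by simp
  finally show ?thesis
    using card_conj by simp
qed

lemma min_poly_beta:
  shows "lead_coeff (min_poly e \<beta>) = 1"
    and "degree (min_poly e \<beta>) = 2 * m"
    and "min_poly e \<beta> dvd h \<longleftrightarrow> poly (map_poly e h) \<beta> = 0"
proof -
  have "CARD('b) < CARD('a) ^ Suc (2 * m)"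
    using card_a card_b q_ge_3 by simp
  then obtain f where f: "f \<noteq> 0" "degree f \<le> 2 * m" "poly (map_poly e f) \<beta> = 0"
    by (rule exists_annihilator_degree_le)
  show lead: "lead_coeff (min_poly e \<beta>) = 1"
    by (rule min_poly(1)[OF f(1,3)])
  show dvd_iff: "min_poly e \<beta> dvd h \<longleftrightarrow> poly (map_poly e h) \<beta> = 0" for h
    using min_poly(2)[OF f(1,3), of h] by simp
  have "2 * m \<le> degree (min_poly e \<beta>)"
    using lead dvd_iff[of "min_poly e \<beta>"] by (intro annihilator_degree_ge) auto
  then show "degree (min_poly e \<beta>) = 2 * m"
    using min_poly(3)[OF f(1,3)] f(2) by simp
qed

lemma min_poly_beta_dvd: "min_poly e \<beta> dvd monom 1 n + 1"
  by (simp add: min_poly_beta(3) poly_monom beta_power_n)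

lemma code_eq:
  "negacyclic_code n (min_poly e \<beta>) = {c. degree c < n \<and> poly (map_poly e c) \<beta> = 0}"
  by (simp add: negacyclic_code_eq[OF n_pos min_poly_beta_dvd] min_poly_beta(3))

lemma code_dim_eq: "code_dim (negacyclic_code n (min_poly e \<beta>)) = n - 2 * m"
proof -
  have "degree (min_poly e \<beta>) \<le> n"
    using dvd_imp_degree_le[OF min_poly_beta_dvd monom_plus_one_ne_0[OF n_pos]]
      degree_monom_plus_one[OF n_pos, where 'a = 'a] by simp
  moreover have "min_poly e \<beta> \<noteq> 0"
    using min_poly_beta(1) by auto
  ultimately show ?thesis
    using code_dim_multiples[of "min_poly e \<beta>" n] min_poly_beta(2)
    by (simp add: negacyclic_code_eq[OF n_pos min_poly_beta_dvd])
qed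

section \<open>The minimum distance\<close>

lemma sparse_codeword:
  assumes "f \<noteq> g" "poly (map_poly e (f - g)) \<beta> = 0"
    and "set xs \<subseteq> {..<n}" "\<And>t. coeff (f - g) t \<noteq> 0 \<Longrightarrow> t \<in> set xs"
  obtains c where "c \<noteq> 0" "degree c < n" "poly (map_poly e c) \<beta> = 0" "hamming_wt n c \<le> length xs"
proof (rule that[of "f - g"])
  show "degree (f - g) < n"
    by (rule degree_less_hamming_wt_le_of_support(1)[OF n_pos assms(3,4)])
  show "hamming_wt n (f - g) \<le> length xs"
    by (rule degree_less_hamming_wt_le_of_support(2)[OF n_pos assms(3,4)])
qed (use assms(1,2) in simp_all)

lemma q_minus_1_dvd: "q - 1 dvd q ^ m - 1"
  using pred_dvd_power_pred[of q m] q_ge_3 by simp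

lemma q_plus_1_dvd:
  assumes "even m"
  shows "q + 1 dvd q ^ m - 1"
proof -
  have "q\<^sup>2 - 1 = (q + 1) * (q - 1)"
    using q_ge_3 by (cases q) (simp_all add: power2_eq_square algebra_simps)
  then have "q + 1 dvd q\<^sup>2 - 1"
    by (simp only:) (rule dvd_triv_left)
  also have "q\<^sup>2 - 1 dvd (q\<^sup>2) ^ (m div 2) - 1"
    using q_ge_3 by (intro pred_dvd_power_pred) simp
  finally show ?thesis
    using assms by (simp flip: power_mult)
qed

lemma two_term_relation:
  assumes "a \<noteq> 0" "i < n" "j < n" "e a * \<beta> ^ i + e b * \<beta> ^ j = 0"
  shows "i = j"
proof -
  have "(e a * \<beta> ^ i + e b * \<beta> ^ j) ^ q = 0"
    using assms(4) q_ge_3 by simp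
  then have "e a * (\<beta> ^ i) ^ q + e b * (\<beta> ^ j) ^ q = 0"
    by (simp add: frobenius_add_q power_mult_distrib)
  then have "\<beta> ^ i * (\<beta> ^ j) ^ q = \<beta> ^ j * (\<beta> ^ i) ^ q"
    using two_term_relation_cross_eq[OF assms(4)] assms(1) by simp
  then have "(\<beta> ^ i) ^ (q - 1) = (\<beta> ^ j) ^ (q - 1)"
    by (rule power_pred_eq_if_cross_eq) (simp_all add: beta_ne_0)
  then show ?thesis
    by (rule beta_power_power_inj[OF q_minus_1_dvd assms(2,3)])
qed

text \<open>Applying \<open>x \<mapsto> x ^ q ^ m\<close>, which inverts powers of \<open>\<beta>\<close>, and then \<open>x \<mapsto> x ^ q\<close>
  to a three-term relation and eliminating the third term.\<close>

lemma three_term_relation_cross: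
  assumes "a \<noteq> 0" "b \<noteq> 0" "e a * \<beta> ^ i + e b * \<beta> ^ j + e c * \<beta> ^ l = 0"
  shows "\<beta> ^ i * (\<beta> ^ j) ^ q = \<beta> ^ j * (\<beta> ^ i) ^ q \<or> \<beta> ^ i * (\<beta> ^ i) ^ q = \<beta> ^ j * (\<beta> ^ j) ^ q"
proof -
  define u v w where "u = \<beta> ^ i" and "v = \<beta> ^ j" and "w = \<beta> ^ l"
  define K where "K = e (a * a + b * b - c * c)"
  have nz: "u \<noteq> 0" "v \<noteq> 0" "w \<noteq> 0"
    using beta_ne_0 by (simp_all add: u_def v_def w_def)
  have rel: "e a * u + e b * v + e c * w = 0"
    using assms(3) by (simp add: u_def v_def w_def)
  have "(e a * u + e b * v + e c * w) ^ q ^ m = 0"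
    using rel q_ge_3 by simp
  then have "e a * inverse u + e b * inverse v + e c * inverse w = 0"
    by (simp add: u_def v_def w_def frobenius_add power_mult_distrib beta_power_inverse)
  from three_term_relation_quadratic[OF rel this nz]
  have quad: "e a * e b * u\<^sup>2 + K * u * v + e a * e b * v\<^sup>2 = 0"
    by (simp add: K_def power2_eq_square)
  have "K ^ q = K"
    unfolding K_def by (rule emb_power_q)
  moreover have "(x\<^sup>2) ^ q = (x ^ q)\<^sup>2" for x :: 'b
    by (simp add: mult.commute flip: power_mult)
  ultimately have "(e a * e b * u\<^sup>2 + K * u * v + e a * e b * v\<^sup>2) ^ q =
      e a * e b * (u ^ q)\<^sup>2 + K * u ^ q * v ^ q + e a * e b * (v ^ q)\<^sup>2"
    by (simp add: frobenius_add_q power_mult_distrib)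
  with quad q_ge_3 have "e a * e b * (u ^ q)\<^sup>2 + K * u ^ q * v ^ q + e a * e b * (v ^ q)\<^sup>2 = 0"
    by (simp add: power_0_left)
  with quad assms(1,2) show ?thesis
    unfolding u_def v_def by (intro quadratic_relation_frobenius) auto
qed

text \<open>For even \<open>m\<close> both \<open>q - 1\<close> and \<open>q + 1\<close> divide \<open>q ^ m - 1\<close>.\<close>

lemma three_term_relation_even:
  assumes "even m" "a \<noteq> 0" "b \<noteq> 0" "i < n" "j < n"
    and "e a * \<beta> ^ i + e b * \<beta> ^ j + e c * \<beta> ^ l = 0"
  shows "i = j"
  using three_term_relation_cross[OF assms(2,3,6)]
proof
  assume "\<beta> ^ i * (\<beta> ^ j) ^ q = \<beta> ^ j * (\<beta> ^ i) ^ q"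
  then have "(\<beta> ^ i) ^ (q - 1) = (\<beta> ^ j) ^ (q - 1)"
    by (rule power_pred_eq_if_cross_eq) (simp_all add: beta_ne_0)
  then show ?thesis
    by (rule beta_power_power_inj[OF q_minus_1_dvd assms(4,5)])
next
  assume "\<beta> ^ i * (\<beta> ^ i) ^ q = \<beta> ^ j * (\<beta> ^ j) ^ q"
  then have "(\<beta> ^ i) ^ (q + 1) = (\<beta> ^ j) ^ (q + 1)"
    by simp
  then show ?thesis
    by (rule beta_power_power_inj[OF q_plus_1_dvd[OF assms(1)] assms(4,5)])
qed

lemma char_3_if_q_eq_3:
  assumes "q = 3"
  shows "(3::'b) = 0"
proof -
  have "0 < k"
    using assms q_eq by (cases k) auto
  then have "p dvd 3"
    using assms q_eq dvd_power[of k p] by simp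
  moreover have "2 \<le> p"
    using prime_gt_1_nat[OF prime_p] by simp
  ultimately have "p = 3"
    using dvd_imp_le[of p 3] by (cases "p = 2") auto
  then show ?thesis
    using of_nat_CHAR[where 'a = 'b] CHAR_eq_p by simp
qed

text \<open>For \<open>q = 3\<close> every nonzero scalar is \<open>\<plusminus>1\<close>, hence its own inverse.\<close>

lemma term_power_q_power_m_if_q_eq_3:
  assumes "q = 3" "a \<noteq> 0"
  shows "(e a * \<beta> ^ i) ^ q ^ m = inverse (e a * \<beta> ^ i)"
proof -
  have "a * (a * a) = a * 1"
    using power_card_eq_self[of a] card_a assms(1) by (simp add: power3_eq_cube)
  then have "a * a = 1"
    by (simp only: mult_left_cancel[OF assms(2)])
  then have "e a * e a = 1"
    using emb_mult[of a a] by simp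
  then have "inverse (e a) = e a"
    by (rule inverse_unique)
  then show ?thesis
    by (simp add: power_mult_distrib beta_power_inverse)
qed

lemma three_term_relation_q_eq_3:
  assumes "q = 3" "a \<noteq> 0" "b \<noteq> 0" "c \<noteq> 0" "i < n" "j < n"
    and "e a * \<beta> ^ i + e b * \<beta> ^ j + e c * \<beta> ^ l = 0"
  shows "i = j"
proof -
  have "(e a * \<beta> ^ i + e b * \<beta> ^ j + e c * \<beta> ^ l) ^ q ^ m = 0"
    using assms(7) q_ge_3 by simp
  then have "inverse (e a * \<beta> ^ i) + inverse (e b * \<beta> ^ j) + inverse (e c * \<beta> ^ l) = 0"
    by (simp only: frobenius_add term_power_q_power_m_if_q_eq_3[OF assms(1)] assms(2-4)
        not_False_eq_True)
  then have "e a * \<beta> ^ i = e b * \<beta> ^ j"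
    using reciprocal_three_term_char_3[OF char_3_if_q_eq_3[OF assms(1)] assms(7)]
      assms(2-4) beta_ne_0 by simp
  then have "e a * \<beta> ^ i + e (- b) * \<beta> ^ j = 0"
    by simp
  then show ?thesis
    by (rule two_term_relation[OF assms(2,5,6)])
qed

lemma four_term_relation_q_eq_3:
  assumes "q = 3" "a \<noteq> 0" "b \<noteq> 0" "c \<noteq> 0" "d \<noteq> 0" "i < n" "j < n" "l < n" "r < n"
    and "e a * \<beta> ^ i + e b * \<beta> ^ j + e c * \<beta> ^ l + e d * \<beta> ^ r = 0"
  shows "i = j \<or> i = l \<or> i = r"
proof -
  have "(e a * \<beta> ^ i + e b * \<beta> ^ j + e c * \<beta> ^ l + e d * \<beta> ^ r) ^ q ^ m = 0"
    using assms(10) q_ge_3 by simp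
  then have "inverse (e a * \<beta> ^ i) + inverse (e b * \<beta> ^ j) + inverse (e c * \<beta> ^ l)
      + inverse (e d * \<beta> ^ r) = 0"
    by (simp only: frobenius_add term_power_q_power_m_if_q_eq_3[OF assms(1)] assms(2-5)
        not_False_eq_True)
  then have "e a * \<beta> ^ i + e b * \<beta> ^ j = 0 \<or> e a * \<beta> ^ i + e c * \<beta> ^ l = 0
      \<or> e a * \<beta> ^ i + e d * \<beta> ^ r = 0"
    using reciprocal_four_term[OF assms(10)] assms(2-5) beta_ne_0 by simp
  then show ?thesis
    using two_term_relation[OF assms(2,6)] assms(7-9) by blast
qed

lemma vanishing_sum_card_ge_3:
  assumes "finite S" "S \<subseteq> {..<n}" "S \<noteq> {}" "\<And>i. i \<in> S \<Longrightarrow> a i \<noteq> 0"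
    and "(\<Sum>i\<in>S. e (a i) * \<beta> ^ i) = 0"
  shows "3 \<le> card S"
proof -
  have "card S \<noteq> 0"
    using assms(1,3) by simp
  moreover have "card S \<noteq> 1"
  proof
    assume "card S = 1"
    then obtain i where "S = {i}"
      by (rule card_1_singletonE)
    then show False
      using assms(4,5) beta_ne_0 by simp
  qed
  moreover have "card S \<noteq> 2"
  proof
    assume "card S = 2"
    then obtain i j where ij: "S = {i, j}" "i \<noteq> j"
      by (auto simp: card_2_iff)
    with assms(5) have "e (a i) * \<beta> ^ i + e (a j) * \<beta> ^ j = 0"
      by simp
    moreover have "a i \<noteq> 0" "i < n" "j < n"
      using ij(1) assms(2,4) by auto
    ultimately show False
      using two_term_relation ij(2) by blast
  qed
  ultimately show ?thesis
    by linarith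
qed

lemma vanishing_sum_card_ne_3:
  assumes "q = 3 \<or> even m" "S \<subseteq> {..<n}" "\<And>i. i \<in> S \<Longrightarrow> a i \<noteq> 0"
    and "(\<Sum>i\<in>S. e (a i) * \<beta> ^ i) = 0"
  shows "card S \<noteq> 3"
proof
  assume "card S = 3"
  then obtain i j l where ijl: "S = {i, j, l}" "i \<noteq> j" "j \<noteq> l" "i \<noteq> l"
    by (auto simp: card_3_iff)
  with assms(4) have "e (a i) * \<beta> ^ i + e (a j) * \<beta> ^ j + e (a l) * \<beta> ^ l = 0"
    by (simp add: add.assoc)
  moreover have "i < n" "j < n" "a i \<noteq> 0" "a j \<noteq> 0" "a l \<noteq> 0"
    using ijl(1) assms(2,3) by auto
  ultimately have "i = j"
    using assms(1) three_term_relation_even three_term_relation_q_eq_3 by blast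
  with ijl(2) show False ..
qed

lemma vanishing_sum_card_ne_4:
  assumes "q = 3" "S \<subseteq> {..<n}" "\<And>i. i \<in> S \<Longrightarrow> a i \<noteq> 0"
    and "(\<Sum>i\<in>S. e (a i) * \<beta> ^ i) = 0"
  shows "card S \<noteq> 4"
proof
  assume "card S = 4"
  then have "card S = Suc 3"
    by simp
  then obtain i T where "S = insert i T" "i \<notin> T" "card T = 3"
    using card_eq_SucD by blast
  moreover from \<open>card T = 3\<close> obtain j l r where "T = {j, l, r}" "j \<noteq> l" "l \<noteq> r" "j \<noteq> r"
    by (auto simp: card_3_iff)
  ultimately have ijlr: "S = {i, j, l, r}" "i \<noteq> j" "i \<noteq> l" "i \<noteq> r" "j \<noteq> l" "l \<noteq> r" "j \<noteq> r"
    by auto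
  with assms(4) have "e (a i) * \<beta> ^ i + e (a j) * \<beta> ^ j + e (a l) * \<beta> ^ l + e (a r) * \<beta> ^ r = 0"
    by (simp add: add.assoc)
  moreover have "i < n" "j < n" "l < n" "r < n" "a i \<noteq> 0" "a j \<noteq> 0" "a l \<noteq> 0" "a r \<noteq> 0"
    using ijlr(1) assms(2,3) by auto
  ultimately have "i = j \<or> i = l \<or> i = r"
    using assms(1) four_term_relation_q_eq_3 by blast
  with ijlr(2-4) show False
    by blast
qed

lemma codeword_weight_ge:
  assumes "c \<noteq> 0" "degree c < n" "poly (map_poly e c) \<beta> = 0"
  shows "(if q = 3 then 5 else if odd m then 3 else 4) \<le> hamming_wt n c"
proof -
  define S where "S = {i. i < n \<and> coeff c i \<noteq> 0}"
  have S: "finite S" "S \<subseteq> {..<n}" "\<And>i. i \<in> S \<Longrightarrow> coeff c i \<noteq> 0"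
    by (auto simp: S_def)
  have "degree c \<in> S"
    using assms(1,2) by (simp add: S_def)
  then have "S \<noteq> {}"
    by auto
  have "(\<Sum>i\<in>S. e (coeff c i) * \<beta> ^ i) = (\<Sum>i<n. e (coeff c i) * \<beta> ^ i)"
    by (rule sum.mono_neutral_left) (auto simp: S_def)
  also have "\<dots> = poly (map_poly e c) \<beta>"
    using assms(2) by (simp add: poly_eq_sum_lessThan)
  finally have sum: "(\<Sum>i\<in>S. e (coeff c i) * \<beta> ^ i) = 0"
    using assms(3) by simp
  show ?thesis
    using vanishing_sum_card_ge_3[OF S(1,2) \<open>S \<noteq> {}\<close> S(3) sum]
      vanishing_sum_card_ne_3[OF _ S(2,3) sum] vanishing_sum_card_ne_4[OF _ S(2,3) sum]
    unfolding hamming_wt_def S_def[symmetric] by auto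
qed

lemma card_nonzero_a: "card (UNIV - {0 :: 'a}) = q - 1"
  using card_a by (simp add: card_Diff_singleton)

lemma card_b_eq: "CARD('b) = (2 * n - 1) * (2 * n - 1)"
  using card_b two_n_eq by (simp add: power_mult power2_eq_square mult.commute[of 2])

lemma exists_codeword_weight_le_4:
  assumes "3 < q"
  obtains c where "c \<noteq> 0" "degree c < n" "poly (map_poly e c) \<beta> = 0" "hamming_wt n c \<le> 4"
proof -
  let ?D = "{(i, j). i < j \<and> j < n} \<times> (UNIV - {0 :: 'a}) \<times> (UNIV - {0 :: 'a})"
  let ?P = "\<lambda>((i, j), a, b). monom a i + monom b j :: 'a poly"
  have inj: "inj_on ?P ?D"
    by (rule inj_on_subset[OF inj_on_two_term_polys]) auto
  have fin: "finite ?D"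
    by (intro finite_cartesian_product finite_subset[of _ "{..<n} \<times> {..<n}"]) auto
  have "5 \<le> q"
    using assms odd_q by presburger
  then have "16 * card {(i, j). i < j \<and> j < n} \<le> card ?D"
    using mult_le_mono[of 4 "q - 1" 4 "q - 1"] by (simp add: card_cartesian_product card_nonzero_a)
  moreover have "2 \<le> n"
    using two_n_eq q_ge_3 m_ge_2 power_increasing[of 1 m q] by simp
  then obtain n' where "n = n' + 2"
    using le_Suc_ex by (metis add.commute)
  then have "CARD('b) < 8 * (n * (n - 1))"
    unfolding card_b_eq by (simp add: algebra_simps)
  ultimately have card: "card (UNIV :: 'b set) < card ?D"
    using card_ordered_pairs[of n] by simp
  obtain x y where xy: "x \<in> ?D" "y \<in> ?D" "?P x \<noteq> ?P y" "poly (map_poly e (?P x - ?P y)) \<beta> = 0"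
    by (rule pigeonhole_root[of ?D ?P UNIV \<beta>]) (use inj fin card in auto)
  obtain i j a b i' j' a' b' where x: "x = ((i, j), a, b)" and y: "y = ((i', j'), a', b')"
    by (metis prod.collapse)
  have sub: "set [i, j, i', j'] \<subseteq> {..<n}"
    and supp: "\<And>t. coeff (?P x - ?P y) t \<noteq> 0 \<Longrightarrow> t \<in> set [i, j, i', j']"
    using xy(1,2) by (auto simp: x y split: if_splits)
  show ?thesis
    by (rule sparse_codeword[OF xy(3,4) sub supp]) (auto intro: that)
qed

lemma exists_codeword_weight_le_5:
  assumes "q = 3" "3 \<le> m"
  obtains c where "c \<noteq> 0" "degree c < n" "poly (map_poly e c) \<beta> = 0" "hamming_wt n c \<le> 5"
proof -
  define N where "N = n - 1"
  let ?D = "({(i, j). i < j \<and> j < N} \<times> (UNIV - {0 :: 'a}) \<times> (UNIV - {0 :: 'a})) \<times> (UNIV :: 'a set)"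
  let ?P = "\<lambda>(((i, j), a, b), t). monom a i + monom b j + monom t N :: 'a poly"
  have inj: "inj_on ?P ?D"
    by (rule inj_on_two_term_plus_monom_polys)
  have fin: "finite ?D"
    by (intro finite_cartesian_product finite_subset[of _ "{..<N} \<times> {..<N}"]) auto
  have "3 ^ 3 \<le> q ^ m"
    using assms power_increasing[of 3 m "3::nat"] by simp
  then have "6 \<le> N"
    using two_n_eq N_def by simp
  then obtain N' where "N = N' + 6"
    using le_Suc_ex by (metis add.commute)
  moreover have "n = N + 1"
    using n_pos N_def by simp
  ultimately have "CARD('b) < 6 * (N * (N - 1))"
    unfolding card_b_eq by (simp add: algebra_simps)
  then have card: "card (UNIV :: 'b set) < card ?D"
    using card_ordered_pairs[of N] assms(1)
    by (simp add: card_cartesian_product card_nonzero_a card_a)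
  obtain x y where xy: "x \<in> ?D" "y \<in> ?D" "?P x \<noteq> ?P y" "poly (map_poly e (?P x - ?P y)) \<beta> = 0"
    by (rule pigeonhole_root[of ?D ?P UNIV \<beta>]) (use inj fin card in auto)
  obtain i j a b t i' j' a' b' t' where x: "x = (((i, j), a, b), t)" and y: "y = (((i', j'), a', b'), t')"
    by (metis prod.collapse)
  have sub: "set [i, j, i', j', N] \<subseteq> {..<n}"
    and supp: "\<And>s. coeff (?P x - ?P y) s \<noteq> 0 \<Longrightarrow> s \<in> set [i, j, i', j', N]"
    using xy(1,2) n_pos by (auto simp: x y N_def split: if_splits)
  show ?thesis
    by (rule sparse_codeword[OF xy(3,4) sub supp]) (auto intro: that)
qed

lemma beta_power_in_subfield:
  assumes "3 < q" "odd m"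
  obtains k0 where "0 < k0" "2 * k0 < n" "(\<beta> ^ k0) ^ q\<^sup>2 = \<beta> ^ k0"
proof -
  have "5 \<le> q"
    using assms(1) odd_q by presburger
  obtain k0 where k0: "2 * n = (q + 1) * k0"
    using plus_one_dvd_power_plus_one[OF assms(2), of q] two_n_eq by auto
  then have "0 < k0"
    using n_pos by (cases k0) auto
  have "6 * k0 \<le> (q + 1) * k0"
    using \<open>5 \<le> q\<close> by (intro mult_le_mono1) simp
  then have "2 * k0 < n"
    using k0 \<open>0 < k0\<close> by linarith
  have "(\<beta> ^ k0) ^ (q + 1) = \<beta> ^ (2 * n)"
    unfolding k0 power_mult[symmetric] by (simp only: mult.commute)
  then have "(\<beta> ^ k0) ^ (q + 1) = 1"
    by (simp add: beta_power_eq_1_iff)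
  moreover have "q\<^sup>2 = (q + 1) * (q - 1) + 1"
    using \<open>5 \<le> q\<close> by (cases q) (simp_all add: power2_eq_square algebra_simps)
  then have "(\<beta> ^ k0) ^ q\<^sup>2 = ((\<beta> ^ k0) ^ (q + 1)) ^ (q - 1) * \<beta> ^ k0"
    by (simp only: power_add power_mult power_one_right)
  ultimately show ?thesis
    using that \<open>0 < k0\<close> \<open>2 * k0 < n\<close> by simp
qed

text \<open>For odd \<open>m\<close> the \<open>q\<^sup>3\<close> values \<open>a + b x + c x\<^sup>2\<close>, with \<open>x = \<beta> ^ k0\<close> as above, all lie in
  the subfield of order \<open>q\<^sup>2\<close>, so two of them coincide.\<close>

lemma exists_codeword_weight_le_3:
  assumes "3 < q" "odd m"
  obtains c where "c \<noteq> 0" "degree c < n" "poly (map_poly e c) \<beta> = 0" "hamming_wt n c \<le> 3"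
proof -
  obtain k0 where k0: "0 < k0" "2 * k0 < n" and x_fixed: "(\<beta> ^ k0) ^ q\<^sup>2 = \<beta> ^ k0"
    using beta_power_in_subfield[OF assms] .
  let ?R = "{z :: 'b. z ^ q\<^sup>2 = z}"
  have "2 \<le> q\<^sup>2"
    using q_ge_3 power_increasing[of 1 2 q] by simp
  then have fin_R: "finite ?R" and "card ?R \<le> q\<^sup>2"
    by (rule finite_card_power_eq_self)+
  moreover have "q\<^sup>2 < q ^ 3"
    using q_ge_3 by (intro power_strict_increasing) simp_all
  ultimately have card: "card ?R < CARD('a \<times> 'a \<times> 'a)"
    using card_a by (simp add: power3_eq_cube)
  let ?P = "\<lambda>(a, b, c). monom a 0 + monom b k0 + monom c (2 * k0) :: 'a poly"
  have in_R: "poly (map_poly e (?P y)) \<beta> \<in> ?R" for y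
  proof -
    obtain a b c where y: "y = (a, b, c)"
      by (metis prod.collapse)
    have sq: "(z\<^sup>2) ^ q\<^sup>2 = (z ^ q\<^sup>2)\<^sup>2" for z :: 'b
      by (simp add: mult.commute flip: power_mult)
    have "\<beta> ^ (2 * k0) = (\<beta> ^ k0)\<^sup>2"
      by (simp add: mult.commute flip: power_mult)
    then have "poly (map_poly e (?P y)) \<beta> = e a + e b * \<beta> ^ k0 + e c * (\<beta> ^ k0)\<^sup>2"
      by (simp add: y poly_monom)
    then show ?thesis
      by (simp add: frobenius_add power_mult_distrib sq x_fixed)
  qed
  obtain y z where yz: "?P y \<noteq> ?P z" "poly (map_poly e (?P y - ?P z)) \<beta> = 0"
    by (rule pigeonhole_root[of UNIV ?P ?R \<beta>])
      (use inj_three_term_polys[OF k0(1)] fin_R card in_R in auto)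
  obtain a b c a' b' c' where y: "y = (a, b, c)" and z: "z = (a', b', c')"
    by (metis prod.collapse)
  have sub: "set [0, k0, 2 * k0] \<subseteq> {..<n}"
    and supp: "\<And>t. coeff (?P y - ?P z) t \<noteq> 0 \<Longrightarrow> t \<in> set [0, k0, 2 * k0]"
    using k0(2) by (auto simp: y z split: if_splits)
  show ?thesis
    by (rule sparse_codeword[OF yz sub supp]) (auto intro: that)
qed

lemma min_dist_eq:
  "min_dist n (negacyclic_code n (min_poly e \<beta>)) = (if q = 3 then 5 else if odd m then 3 else 4)"
proof -
  let ?d = "if q = 3 then 5 else if odd m then 3 else 4 :: nat"
  obtain c where c: "c \<noteq> 0" "degree c < n" "poly (map_poly e c) \<beta> = 0" "hamming_wt n c \<le> ?d"
  proof (cases "q = 3")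
    case True
    show ?thesis
    proof (cases "m = 2")
      case True
      then have "n = 5"
        using two_n_eq \<open>q = 3\<close> by simp
      then show ?thesis
        using that[of "min_poly e \<beta>"] min_poly_beta hamming_wt_le[of n "min_poly e \<beta>"] True \<open>q = 3\<close>
        by force
    next
      case False
      with m_ge_2 True show ?thesis
        using that exists_codeword_weight_le_5[of thesis] by auto
    qed
  next
    case False
    then have "3 < q"
      using q_ge_3 by simp
    then show ?thesis
      using that exists_codeword_weight_le_3[of thesis] exists_codeword_weight_le_4[of thesis] False
      by (cases "odd m") auto
  qed
  then show ?thesis
    using codeword_weight_ge by (intro min_dist_eqI[of _ _ _ c]) (auto simp: code_eq)
qed

end

theorem theorem34:
  fixes q m n l :: nat
    and e :: "'a::{field,finite} \<Rightarrow> 'b::{field,finite}"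
    and \<alpha> \<beta> :: 'b
  assumes "\<exists>p k. prime p \<and> k > 0 \<and> q = p ^ k"
    and "odd q"
    and "m \<ge> 2"
    and "n = (q ^ m + 1) div 2"
    and "CARD('a) = q"
    and "l = ord (2 * n) q"
    and "CARD('b) = q ^ l"
    and "field_emb e"
    and "primitive_elem \<alpha>"
    and "\<beta> = \<alpha> ^ ((q ^ l - 1) div (2 * n))"
  shows "code_dim (negacyclic_code n (min_poly e \<beta>)) = n - 2 * m \<and>
         min_dist n (negacyclic_code n (min_poly e \<beta>)) =
           (if q = 3 then 5 else if odd m then 3 else 4)"
proof -
  obtain p k where p: "prime p" "0 < k" "q = p ^ k"
    using assms(1) by blast
  then have "2 \<le> q"
    using prime_ge_2_nat[OF p(1)] power_increasing[of 1 k p] by simp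
  have two_n: "2 * n = q ^ m + 1"
    using assms(2,4) by simp
  then have l: "l = 2 * m"
    using ord_power_plus_one[of q m] assms(3,6) \<open>2 \<le> q\<close> by simp
  have "[q ^ l = 1] (mod 2 * n)"
    using assms(6) ord[of q "2 * n"] by simp
  then have "2 * n dvd CARD('b) - 1"
    using assms(7) \<open>2 \<le> q\<close> by (simp add: cong_altdef_nat)
  moreover have "3 \<le> q"
    using \<open>2 \<le> q\<close> assms(2) by presburger
  then have "2 < CARD('b)"
    using assms(3,7) l power_increasing[of 1 "2 * m" q] by simp
  ultimately have "\<beta> ^ j = 1 \<longleftrightarrow> 2 * n dvd j" for j
    using primitive_elem_root_of_unity[OF assms(9)] assms(7,10) by simp
  then interpret negacyclic_bch e p k q m n \<beta>
    using p assms(2,3,5,7,8) two_n l by unfold_locales simp_all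
  show ?thesis
    using code_dim_eq min_dist_eq by simp
qed

end
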